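(* Let $p\geq1$ and let $(E,d)$ be a separable, locally compact geodesic space. For every $J\in\mathbb{N}^*$ and nonnegative weights $(\lambda_j)_{1\leq j\leq J}$ with $\sum_j\lambda_j=1$, there exists a Borel map $T:E^J\to E$ such that for every $(x_1,\dots,x_J)\in E^J$, $T(x_1,\dots,x_J)$ is a minimizer of $x\mapsto\sum_{j=1}^J\lambda_j d^p(x,x_j)$ over $E$.
   Context: A geodesic space is a complete metric space $(E,d)$ in which every two points $x,y$ have a mid-point, i.e. a point $z$ with $d(x,z)=d(z,y)=\tfrac12 d(x,y)$. *)

theory Defs
  imports "HOL-Analysis.Analysis"
begin

definition geodesic_space :: "'a::metric_space itself \<Rightarrow> bool" where
  "geodesic_space _ \<longleftrightarrow> complete (UNIV :: 'a set) \<and>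
     (\<forall>x y :: 'a. \<exists>z. dist x z = dist x y / 2 \<and> dist z y = dist x y / 2)"

end

theory Submission
  imports Defs
begin

text \<open>Iterated midpoints give approximate geodesics. With them, in a complete locally compact space
  the supremum \<open>R\<close> of the radii of compact balls around a point is itself such a radius (total
  boundedness is inherited from the smaller balls) and can be enlarged (finitely many compact balls
  cover the \<open>R\<close>-ball), so all closed balls are compact. Hence the coercive continuous cost
  \<open>\<Sum>j. \<lambda>\<^sub>j d(x, x\<^sub>j)\<^sup>p\<close> attains its minimum, and the parameters whose minimizer set meets a given closed
  ball form the closed projection of a closed set along a compact factor. A measurable selection of
  minimizers is then obtained as the limit of successive choices from a countable dense sequence,
  as in the Kuratowski--Ryll-Nardzewski selection theorem.\<close>

lemma midpoints_approximate_geodesic: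
  fixes x y :: "'a::metric_space"
  assumes midpoints: "\<And>x y::'a. \<exists>z. dist x z = dist x y / 2 \<and> dist z y = dist x y / 2"
    and "0 \<le> s" "s \<le> dist x y" "e > 0"
  shows "\<exists>z. dist x z \<le> s \<and> dist z y \<le> dist x y - s + e"
proof -
  have approx: "\<exists>z. dist x z \<le> s \<and> dist z y \<le> dist x y - s + e"
    if "dist x y \<le> 2^n * e" "0 \<le> s" "s \<le> dist x y" for n and x y :: 'a and s
    using that
  proof (induction n arbitrary: x y s)
    case 0
    then show ?case by (intro exI[of _ x]) auto
  next
    case (Suc n)
    obtain m where m: "dist x m = dist x y / 2" "dist m y = dist x y / 2"
      using midpoints by blast
    have half: "dist x y / 2 \<le> 2^n * e" using Suc.prems(1) by simp
    show ?case
    proof (cases "s \<le> dist x y / 2")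
      case True
      then obtain z where "dist x z \<le> s" "dist z m \<le> dist x m - s + e"
        using Suc.IH[of x m s] Suc.prems(2) m half by auto
      with m dist_triangle[of z y m] show ?thesis by (intro exI[of _ z]) auto
    next
      case False
      then obtain z where "dist m z \<le> s - dist x y / 2" "dist z y \<le> dist m y - (s - dist x y / 2) + e"
        using Suc.IH[of m y "s - dist x y / 2"] Suc.prems(3) m half by auto
      with m dist_triangle[of x z m] show ?thesis by (intro exI[of _ z]) auto
    qed
  qed
  obtain n where "dist x y / e < 2^n" using real_arch_pow[of 2] by auto
  then have "dist x y \<le> 2^n * e" using \<open>e > 0\<close> by (simp add: field_simps)
  with approx assms(2,3) show ?thesis by blast
qed

lemma compact_closed_subset: "compact K \<Longrightarrow> closed S \<Longrightarrow> S \<subseteq> K \<Longrightarrow> compact S"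
  by (metis compact_Int_closed inf.absorb_iff2)

lemma locally_compact_space_obtains_compact_cball:
  fixes y :: "'a::metric_space"
  assumes "locally_compact_space (euclidean :: 'a topology)"
  obtains \<rho> where "\<rho> > 0" "compact (cball y \<rho>)"
proof -
  have "\<exists>U K. openin euclidean U \<and> compactin euclidean K \<and> y \<in> U \<and> U \<subseteq> K"
    using assms unfolding locally_compact_space_def by simp
  then obtain U K where "open U" "compact K" "y \<in> U" "U \<subseteq> K"
    by (metis compactin_euclidean_iff open_openin)
  then obtain e where "e > 0" "cball y e \<subseteq> U"
    using open_contains_cball by blast
  with \<open>compact K\<close> \<open>U \<subseteq> K\<close> that show ?thesis
    using compact_closed_subset[of K "cball y e"] by auto
qed

lemma compact_cball_if_smaller_compact:
  fixes x :: "'a::metric_space"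
  assumes midpoints: "\<And>x y::'a. \<exists>z. dist x z = dist x y / 2 \<and> dist z y = dist x y / 2"
    and complete: "complete (UNIV :: 'a set)"
    and smaller: "\<And>t. t < R \<Longrightarrow> compact (cball x t)"
  shows "compact (cball x R)"
  unfolding compact_eq_totally_bounded
proof (intro conjI allI impI)
  show "complete (cball x R)"
    using complete_closed_subset[OF closed_cball _ complete] by simp
next
  fix e :: real
  assume "e > 0"
  show "\<exists>k. finite k \<and> cball x R \<subseteq> (\<Union>c\<in>k. ball c e)"
  proof (cases "R \<le> e/4")
    case True
    with \<open>e > 0\<close> show ?thesis by (intro exI[of _ "{x}"]) auto
  next
    case False
    define r where "r = R - e/4"
    have r: "0 < r" "r < R" using False \<open>e > 0\<close> unfolding r_def by auto
    obtain k where k: "finite k" "cball x r \<subseteq> (\<Union>c\<in>k. ball c (e/4))"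
      using smaller[OF \<open>r < R\<close>] \<open>e > 0\<close> unfolding compact_eq_totally_bounded
      by (meson divide_pos_pos zero_less_numeral)
    have "y \<in> (\<Union>c\<in>k. ball c e)" if y: "y \<in> cball x R" for y
    proof -
      obtain z where z: "dist x z \<le> r" "dist z y < e/2"
      proof (cases "dist x y \<le> r")
        case True
        with \<open>e > 0\<close> that[of y] show ?thesis by simp
      next
        case False
        then obtain z where "dist x z \<le> r" "dist z y \<le> dist x y - r + e/8"
          using midpoints_approximate_geodesic[OF midpoints, of r x y "e/8"] r \<open>e > 0\<close> by auto
        with y \<open>e > 0\<close> that[of z] show ?thesis unfolding r_def by simp
      qed
      then obtain c where "c \<in> k" "dist c z < e/4" using k by auto
      moreover from this z dist_triangle[of c y z] \<open>e > 0\<close> have "dist c y < e" by linarith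
      ultimately show ?thesis by auto
    qed
    with k show ?thesis by blast
  qed
qed

lemma compact_cball_extends:
  fixes x :: "'a::metric_space"
  assumes midpoints: "\<And>x y::'a. \<exists>z. dist x z = dist x y / 2 \<and> dist z y = dist x y / 2"
    and local_cball: "\<And>y::'a. \<exists>\<rho>>0. compact (cball y \<rho>)"
    and compact: "compact (cball x R)" and "R \<ge> 0"
  shows "\<exists>\<epsilon>>0. compact (cball x (R + \<epsilon>))"
proof -
  obtain \<rho> where \<rho>: "\<And>y::'a. \<rho> y > 0 \<and> compact (cball y (\<rho> y))"
    using local_cball by metis
  obtain k where k: "finite k" "cball x R \<subseteq> (\<Union>y\<in>k. ball y (\<rho> y / 2))"
  proof (rule compactE_image[OF compact, of "cball x R" "\<lambda>y. ball y (\<rho> y / 2)"])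
    show "cball x R \<subseteq> (\<Union>y\<in>cball x R. ball y (\<rho> y / 2))"
      using \<rho> by (auto intro!: bexI)
  qed auto
  have "k \<noteq> {}" using k(2) \<open>R \<ge> 0\<close> by auto
  define \<epsilon> where "\<epsilon> = Min ((\<lambda>y. \<rho> y / 4) ` k)"
  have "\<epsilon> > 0" unfolding \<epsilon>_def using k(1) \<open>k \<noteq> {}\<close> \<rho> by (subst Min_gr_iff) auto
  have \<epsilon>_le: "\<epsilon> \<le> \<rho> y / 4" if "y \<in> k" for y
    unfolding \<epsilon>_def using k(1) that by (intro Min_le) auto
  have "cball x (R + \<epsilon>) \<subseteq> (\<Union>y\<in>k. cball y (\<rho> y))"
  proof
    fix w assume w: "w \<in> cball x (R + \<epsilon>)"
    obtain z where z: "dist x z \<le> R" "dist z w \<le> 2 * \<epsilon>"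
    proof (cases "dist x w \<le> R")
      case True
      with \<open>\<epsilon> > 0\<close> that[of w] show ?thesis by simp
    next
      case False
      then obtain z where "dist x z \<le> R" "dist z w \<le> dist x w - R + \<epsilon>"
        using midpoints_approximate_geodesic[OF midpoints, of R x w \<epsilon>] \<open>R \<ge> 0\<close> \<open>\<epsilon> > 0\<close> by auto
      with w show ?thesis by (intro that) auto
    qed
    then obtain y where "y \<in> k" "dist y z < \<rho> y / 2" using k(2) by auto
    moreover from this z dist_triangle[of y w z] \<epsilon>_le[of y] have "dist y w \<le> \<rho> y" by linarith
    ultimately show "w \<in> (\<Union>y\<in>k. cball y (\<rho> y))" by auto
  qed
  moreover have "compact (\<Union>y\<in>k. cball y (\<rho> y))" using k(1) \<rho> by (intro compact_UN) auto
  ultimately have "compact (cball x (R + \<epsilon>))"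
    using compact_closed_subset closed_cball by blast
  with \<open>\<epsilon> > 0\<close> show ?thesis by blast
qed

lemma compact_cball_midpoint_space:
  fixes x :: "'a::metric_space"
  assumes midpoints: "\<And>x y::'a. \<exists>z. dist x z = dist x y / 2 \<and> dist z y = dist x y / 2"
    and complete: "complete (UNIV :: 'a set)"
    and local_cball: "\<And>y::'a. \<exists>\<rho>>0. compact (cball y \<rho>)"
  shows "compact (cball x r)"
proof (rule ccontr)
  assume not_compact: "\<not> compact (cball x r)"
  have smaller: "compact (cball x t)" if "t \<le> s" "compact (cball x s)" for t s
    using that compact_closed_subset[of "cball x s" "cball x t"] subset_cball[of t s x] by auto
  define S where "S = {t. 0 \<le> t \<and> compact (cball x t)}"
  have "0 \<in> S" unfolding S_def by simp
  have S_less: "t < r" if "t \<in> S" for t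
  proof (rule ccontr)
    assume "\<not> t < r"
    with that smaller[of r t] not_compact show False unfolding S_def by simp
  qed
  then have "bdd_above S" by (meson bdd_aboveI less_imp_le)
  define R where "R = Sup S"
  have upper: "t \<le> R" if "t \<in> S" for t
    unfolding R_def using that \<open>bdd_above S\<close> by (rule cSup_upper)
  have "R \<ge> 0" using upper \<open>0 \<in> S\<close> by blast
  have "compact (cball x t)" if "t < R" for t
  proof -
    obtain s where "s \<in> S" "t < s" using less_cSupE[of t S] \<open>t < R\<close> \<open>0 \<in> S\<close> unfolding R_def by blast
    then show ?thesis using smaller[of t s] unfolding S_def by auto
  qed
  then have "compact (cball x R)"
    using compact_cball_if_smaller_compact[OF midpoints complete] by blast
  then obtain \<epsilon> where "\<epsilon> > 0" "compact (cball x (R + \<epsilon>))"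
    using compact_cball_extends[OF midpoints local_cball _ \<open>R \<ge> 0\<close>] by blast
  then have "R + \<epsilon> \<in> S" unfolding S_def using \<open>R \<ge> 0\<close> by auto
  with upper[of "R + \<epsilon>"] \<open>\<epsilon> > 0\<close> show False by simp
qed

lemma separable_space_obtains_dense_sequence:
  assumes "separable_space (euclidean :: 'a topology)"
  obtains d :: "nat \<Rightarrow> 'a::metric_space" where "\<And>a e. e > 0 \<Longrightarrow> \<exists>k. dist (d k) a < e"
proof -
  obtain C :: "'a set" where C: "countable C" "closure C = UNIV"
    using assms unfolding separable_space_def by auto
  then have "C \<noteq> {}" by auto
  have "\<exists>k. dist (from_nat_into C k) a < e" if "e > 0" for a e
  proof -
    obtain c where "c \<in> C" "dist c a < e"
      using closure_approachable[of a C] C(2) \<open>e > 0\<close> by auto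
    moreover obtain k where "from_nat_into C k = c" using from_nat_into_surj[OF C(1) \<open>c \<in> C\<close>] by blast
    ultimately show ?thesis by blast
  qed
  then show ?thesis by (rule that)
qed

lemma Cauchy_if_dist_Suc_le_geometric:
  fixes f :: "nat \<Rightarrow> 'a::metric_space"
  assumes step: "\<And>n. dist (f (Suc n)) (f n) \<le> C * (1/2)^n"
  shows "Cauchy f"
proof -
  have "C \<ge> 0" using order_trans[OF zero_le_dist step[of 0]] by simp
  have tail: "dist (f (m + k)) (f m) \<le> 2 * C * (1/2)^m - 2 * C * (1/2)^(m + k)" for m k
  proof (induction k)
    case (Suc k)
    have "dist (f (m + Suc k)) (f m) \<le> dist (f (Suc (m + k))) (f (m + k)) + dist (f (m + k)) (f m)"
      by (simp add: dist_triangle)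
    with Suc.IH step[of "m + k"] show ?case by simp
  qed simp
  show ?thesis
    unfolding Cauchy_altdef2
  proof (intro allI impI)
    fix e :: real
    assume "e > 0"
    then obtain N where N: "(1/2::real)^N < e / (2 * C + 1)"
      using real_arch_pow_inv[of "e / (2 * C + 1)" "1/2"] \<open>C \<ge> 0\<close> by auto
    have "dist (f n) (f N) < e" if "n \<ge> N" for n
    proof -
      have "0 \<le> 2 * C * (1/2)^n" using \<open>C \<ge> 0\<close> by simp
      with tail[of N "n - N"] that have "dist (f n) (f N) \<le> 2 * C * (1/2)^N" by simp
      also have "\<dots> \<le> (2 * C + 1) * (1/2)^N" by simp
      also have "\<dots> < e" using N \<open>C \<ge> 0\<close> by (simp add: field_simps)
      finally show ?thesis .
    qed
    then show "\<exists>N. \<forall>n\<ge>N. dist (f n) (f N) < e" by blast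
  qed
qed

text \<open>Stage \<open>n\<close> picks the first point of the dense sequence \<open>d\<close> that is \<open>2^-n\<close>-close to the
  set \<open>{z. Q x z}\<close> and \<open>3\<cdot>2^-n\<close>-close to the previous pick; since only countably many candidates
  are compared, every stage is measurable in \<open>x\<close>.\<close>

primrec approx_selection :: "(nat \<Rightarrow> 'a::metric_space) \<Rightarrow> ('x \<Rightarrow> 'a \<Rightarrow> bool) \<Rightarrow> nat \<Rightarrow> 'x \<Rightarrow> 'a" where
  "approx_selection d Q 0 x = d (LEAST k. \<exists>z. dist (d k) z \<le> 1 \<and> Q x z)"
| "approx_selection d Q (Suc n) x = d (LEAST k. (\<exists>z. dist (d k) z \<le> (1/2)^Suc n \<and> Q x z)
      \<and> dist (d k) (approx_selection d Q n x) \<le> 3 * (1/2)^Suc n)"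

lemma approx_selection_Suc:
  assumes dense: "\<And>a e. e > 0 \<Longrightarrow> \<exists>k. dist (d k) a < e"
    and "\<exists>z. dist (approx_selection d Q n x) z \<le> (1/2)^n \<and> Q x z"
  shows "(\<exists>z. dist (approx_selection d Q (Suc n) x) z \<le> (1/2)^Suc n \<and> Q x z)
    \<and> dist (approx_selection d Q (Suc n) x) (approx_selection d Q n x) \<le> 3 * (1/2)^Suc n"
proof -
  obtain z where z: "dist (approx_selection d Q n x) z \<le> (1/2)^n" "Q x z" using assms(2) by blast
  obtain k where k: "dist (d k) z < (1/2)^Suc n" using dense[of "(1/2)^Suc n" z] by auto
  with z dist_triangle[of "d k" "approx_selection d Q n x" z]
  have "dist (d k) (approx_selection d Q n x) \<le> 3 * (1/2)^Suc n" by (simp add: dist_commute)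
  with k z(2) have "\<exists>k. (\<exists>z. dist (d k) z \<le> (1/2)^Suc n \<and> Q x z)
      \<and> dist (d k) (approx_selection d Q n x) \<le> 3 * (1/2)^Suc n" by (blast intro: less_imp_le)
  from LeastI_ex[OF this] show ?thesis by simp
qed

lemma approx_selection_near:
  assumes dense: "\<And>a e. e > 0 \<Longrightarrow> \<exists>k. dist (d k) a < e"
    and "\<exists>z. Q x z"
  shows "\<exists>z. dist (approx_selection d Q n x) z \<le> (1/2)^n \<and> Q x z"
proof (induction n)
  case 0
  obtain z where "Q x z" using assms(2) by blast
  moreover obtain k where "dist (d k) z < 1" using dense[of 1 z] by auto
  ultimately have "\<exists>k z. dist (d k) z \<le> 1 \<and> Q x z" by (blast intro: less_imp_le)
  from LeastI_ex[OF this] show ?case by simp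
next
  case (Suc n)
  from approx_selection_Suc[OF dense this] show ?case by (rule conjunct1)
qed

lemma approx_selection_measurable:
  assumes "\<And>k r. {x \<in> space M. \<exists>z. dist (d k) z \<le> r \<and> Q x z} \<in> sets M"
  shows "approx_selection d Q n \<in> borel_measurable M"
proof -
  have [measurable]: "(\<lambda>x. \<exists>z. dist (d k) z \<le> r \<and> Q x z) \<in> measurable M (count_space UNIV)" for k r
    using assms by (rule pred_def[THEN iffD2])
  show ?thesis
  proof (induction n)
    case 0
    show ?case by (simp add: approx_selection.simps(1)[abs_def] del: approx_selection.simps) measurable
  next
    case (Suc n)
    have "dist (d k) \<in> borel_measurable borel" for k
      by (intro borel_measurable_continuous_onI continuous_intros)
    from measurable_compose[OF Suc this]
    have [measurable]: "(\<lambda>x. dist (d k) (approx_selection d Q n x)) \<in> borel_measurable M" for k .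
    show ?case unfolding approx_selection.simps(2)[abs_def] by measurable
  qed
qed

lemma measurable_selection_dense_sequence:
  fixes Q :: "'x \<Rightarrow> 'a::metric_space \<Rightarrow> bool" and d :: "nat \<Rightarrow> 'a"
  assumes dense: "\<And>a e. e > 0 \<Longrightarrow> \<exists>k. dist (d k) a < e"
    and nonempty: "\<And>x. \<exists>z. Q x z"
    and complete: "complete (UNIV :: 'a set)"
    and sets: "\<And>k r. {x \<in> space M. \<exists>z. dist (d k) z \<le> r \<and> Q x z} \<in> sets M"
    and closed: "\<And>x. closed {z. Q x z}"
  shows "\<exists>T \<in> borel_measurable M. \<forall>x. Q x (T x)"
proof -
  let ?T = "approx_selection d Q"
  have near: "\<exists>z. dist (?T n x) z \<le> (1/2)^n \<and> Q x z" for n x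
    using approx_selection_near[OF dense nonempty] .
  have "Cauchy (\<lambda>n. ?T n x)" for x
  proof (rule Cauchy_if_dist_Suc_le_geometric)
    show "dist (?T (Suc n) x) (?T n x) \<le> 3/2 * (1/2)^n" for n
      using approx_selection_Suc[OF dense near] by simp
  qed
  then have "\<forall>x. \<exists>l. (\<lambda>n. ?T n x) \<longlonglongrightarrow> l"
    using complete unfolding complete_def by blast
  then obtain T where lim: "\<And>x. (\<lambda>n. ?T n x) \<longlonglongrightarrow> T x" by metis
  have "T \<in> borel_measurable M"
    using borel_measurable_LIMSEQ_metric[OF approx_selection_measurable[OF sets] lim] .
  moreover have "Q x (T x)" for x
  proof -
    have "infdist (?T n x) {z. Q x z} \<le> (1/2)^n" for n
      using near[of n x] by (auto intro: infdist_le2)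
    then have "infdist (T x) {z. Q x z} \<le> 0"
      by (intro LIMSEQ_le[OF tendsto_infdist[OF lim] LIMSEQ_power_zero]) auto
    then show ?thesis
      using in_closed_iff_infdist_zero[OF closed] nonempty infdist_nonneg
      by (metis empty_Collect_eq mem_Collect_eq order_antisym)
  qed
  ultimately show ?thesis by blast
qed

lemma closed_Collect_argmin_in_compact:
  fixes G :: "'x::topological_space \<Rightarrow> 'a::metric_space \<Rightarrow> real"
  assumes "compact K" and cont: "continuous_on UNIV (\<lambda>q. G (fst q) (snd q))"
  shows "closed {x. \<exists>z\<in>K. \<forall>y. G x z \<le> G x y}"
proof -
  define S where "S = (UNIV \<times> K) \<inter> {q. \<forall>y. G (fst q) (snd q) \<le> G (fst q) y}"
  have "continuous_on UNIV (\<lambda>q. G (fst q) y)" for y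
  proof -
    have "continuous_on UNIV (\<lambda>q. G (fst (fst q, y)) (snd (fst q, y)))"
      by (rule continuous_on_compose2[OF cont]) (auto intro!: continuous_intros)
    then show ?thesis by simp
  qed
  then have "closed {q. \<forall>y. G (fst q) (snd q) \<le> G (fst q) y}"
    by (intro closed_Collect_all closed_Collect_le cont)
  then have "closed S"
    unfolding S_def using \<open>compact K\<close> by (intro closed_Int closed_Times compact_imp_closed) auto
  moreover have "S \<subseteq> UNIV \<times> K" unfolding S_def by auto
  ultimately have "closedin (subtopology euclidean (UNIV \<times> K)) S"
    using closedin_closed_Int[of S "UNIV \<times> K"] by (simp add: Int_absorb1)
  then have "closedin (prod_topology euclidean (subtopology euclidean K)) S"
    by (simp add: prod_topology_subtopology(2))
  moreover have "closed_map (prod_topology euclidean (subtopology euclidean K)) euclidean fst"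
    using \<open>compact K\<close> by (intro closed_map_fst compact_space_subtopology) (simp add: compactin_euclidean_iff)
  ultimately have "closed (fst ` S)" unfolding closed_map_def closed_closedin by blast
  moreover have "fst ` S = {x. \<exists>z\<in>K. \<forall>y. G x z \<le> G x y}"
  proof (intro equalityI subsetI)
    fix x assume "x \<in> fst ` S"
    then show "x \<in> {x. \<exists>z\<in>K. \<forall>y. G x z \<le> G x y}" unfolding S_def by auto
  next
    fix x assume "x \<in> {x. \<exists>z\<in>K. \<forall>y. G x z \<le> G x y}"
    then obtain z where "(x, z) \<in> S" unfolding S_def by auto
    then show "x \<in> fst ` S" by (metis fst_conv image_eqI)
  qed
  ultimately show ?thesis by simp
qed

lemma continuous_on_weighted_dist_powr:
  fixes f :: "'b::topological_space \<Rightarrow> 'n \<Rightarrow> 'a::metric_space" and g :: "'b \<Rightarrow> 'a"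
    and lam :: "'n \<Rightarrow> real"
  assumes "p > 0" "continuous_on S f" "continuous_on S g"
  shows "continuous_on S (\<lambda>t. \<Sum>j\<in>UNIV. lam j * dist (g t) (f t j) powr p)"
proof -
  have "continuous_on S (\<lambda>t. f t j)" for j
    by (rule continuous_on_product_then_coordinatewise[OF assms(2)])
  with assms show ?thesis
    by (intro continuous_on_sum continuous_on_mult continuous_on_const continuous_on_powr'
        continuous_on_dist) auto
qed

lemma continuous_attains_min_if_coercive:
  fixes f :: "'a::metric_space \<Rightarrow> real"
  assumes "compact (cball a R)" "continuous_on UNIV f"
    and coercive: "\<And>y. dist a y > R \<Longrightarrow> f a \<le> f y"
  shows "\<exists>z. \<forall>y. f z \<le> f y"
proof (cases "0 \<le> R")
  case True
  then obtain z where z: "z \<in> cball a R" "\<forall>y\<in>cball a R. f z \<le> f y"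
    using continuous_attains_inf[OF assms(1) _ continuous_on_subset[OF assms(2)]] by auto
  have "f z \<le> f y" for y
  proof (cases "y \<in> cball a R")
    case False
    then have "f a \<le> f y" using coercive by simp
    moreover have "f z \<le> f a" using z(2) True by simp
    ultimately show ?thesis by linarith
  qed (use z in auto)
  then show ?thesis by blast
next
  case False
  then have "f a \<le> f y" for y using coercive[of y] zero_le_dist[of a y] by linarith
  then show ?thesis by blast
qed

lemma weighted_dist_powr_attains_min:
  fixes lam :: "'n::finite \<Rightarrow> real" and xs :: "'n \<Rightarrow> 'a::metric_space"
  assumes proper: "\<And>x::'a. \<And>r. compact (cball x r)" and "p > 0"
    and lam: "\<And>j. lam j \<ge> 0" and "(\<Sum>j\<in>UNIV. lam j) > 0"
  shows "\<exists>z. \<forall>y. (\<Sum>j\<in>UNIV. lam j * dist z (xs j) powr p) \<le> (\<Sum>j\<in>UNIV. lam j * dist y (xs j) powr p)"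
proof -
  define F where "F y = (\<Sum>j\<in>UNIV. lam j * dist y (xs j) powr p)" for y
  obtain j0 where "lam j0 > 0"
    using \<open>(\<Sum>j\<in>UNIV. lam j) > 0\<close> sum_nonpos[of UNIV lam] by (meson not_le)
  define c where "c = F (xs j0) / lam j0"
  have "c \<ge> 0" unfolding c_def F_def using lam \<open>lam j0 > 0\<close> by (simp add: sum_nonneg)
  have "F (xs j0) \<le> F y" if "dist (xs j0) y > c powr (1/p)" for y
  proof -
    have "c = (c powr (1/p)) powr p" using \<open>c \<ge> 0\<close> \<open>p > 0\<close> by (simp add: powr_powr)
    also have "\<dots> < dist y (xs j0) powr p"
      using that \<open>p > 0\<close> by (intro powr_less_mono2) (auto simp: dist_commute)
    finally have "F (xs j0) < lam j0 * dist y (xs j0) powr p"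
      using \<open>lam j0 > 0\<close> unfolding c_def by (simp add: field_simps)
    also have "\<dots> \<le> F y" unfolding F_def by (rule member_le_sum) (use lam in auto)
    finally show ?thesis by simp
  qed
  moreover have "continuous_on UNIV F"
    using continuous_on_weighted_dist_powr[of p UNIV "\<lambda>_. xs" "\<lambda>y. y" lam] \<open>p > 0\<close>
    unfolding F_def by (simp add: continuous_on_id)
  ultimately show ?thesis
    using continuous_attains_min_if_coercive[OF proper] unfolding F_def by blast
qed

theorem mainTheorem7:
  fixes p :: real and lam :: "'n::finite \<Rightarrow> real"
  assumes "p \<ge> 1"
    and "geodesic_space TYPE('a::metric_space)"
    and "separable_space (euclidean :: 'a topology)"
    and "locally_compact_space (euclidean :: 'a topology)"
    and "\<And>j. lam j \<ge> 0"
    and "(\<Sum>j\<in>UNIV. lam j) = 1"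
  shows "\<exists>T :: ('n \<Rightarrow> 'a) \<Rightarrow> 'a. T \<in> borel_measurable borel \<and>
           (\<forall>xs y. (\<Sum>j\<in>UNIV. lam j * dist (T xs) (xs j) powr p)
                   \<le> (\<Sum>j\<in>UNIV. lam j * dist y (xs j) powr p))"
proof -
  have "p > 0" using \<open>p \<ge> 1\<close> by simp
  have complete: "complete (UNIV :: 'a set)"
    and midpoints: "\<And>x y::'a. \<exists>z. dist x z = dist x y / 2 \<and> dist z y = dist x y / 2"
    using assms(2) unfolding geodesic_space_def by blast+
  have "\<exists>\<rho>>0. compact (cball y \<rho>)" for y :: 'a
    using locally_compact_space_obtains_compact_cball[OF assms(4)] by blast
  then have proper: "compact (cball x r)" for x :: 'a and r
    using compact_cball_midpoint_space[OF midpoints complete] by blast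
  obtain d :: "nat \<Rightarrow> 'a" where dense: "\<And>a e. e > 0 \<Longrightarrow> \<exists>k. dist (d k) a < e"
    using separable_space_obtains_dense_sequence[OF assms(3)] by blast
  define F where "F xs y = (\<Sum>j\<in>UNIV. lam j * dist y (xs j) powr p)" for xs :: "'n \<Rightarrow> 'a" and y
  have cont: "continuous_on UNIV (\<lambda>q. F (fst q) (snd q))"
    unfolding F_def using \<open>p > 0\<close>
    by (intro continuous_on_weighted_dist_powr continuous_on_fst continuous_on_snd continuous_on_id)
  have "\<exists>T \<in> borel_measurable borel. \<forall>xs. \<forall>y. F xs (T xs) \<le> F xs y"
  proof (rule measurable_selection_dense_sequence[OF dense _ complete])
    show "\<exists>z. \<forall>y. F xs z \<le> F xs y" for xs
      using weighted_dist_powr_attains_min[where lam=lam and xs=xs, OF proper \<open>p > 0\<close> assms(5)]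
        assms(6)
      unfolding F_def by simp
    show "{xs \<in> space borel. \<exists>z. dist (d k) z \<le> r \<and> (\<forall>y. F xs z \<le> F xs y)} \<in> sets borel" for k r
      using borel_closed[OF closed_Collect_argmin_in_compact[OF proper cont, of "d k" r]]
      by (simp add: Bex_def)
    show "closed {z. \<forall>y. F xs z \<le> F xs y}" for xs
      using continuous_on_weighted_dist_powr[of p UNIV "\<lambda>_. xs" "\<lambda>y. y" lam] \<open>p > 0\<close>
      unfolding F_def
      by (intro closed_Collect_all closed_Collect_le continuous_on_const) (simp add: continuous_on_id)
  qed
  then show ?thesis unfolding F_def by blast
qed

end
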